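(* Let $n\ge 2$ and consider $x(t+1)=Ax(t)+Bu(t)$, where the columns of $B\in\mathbb{R}^{n\times m}$ are canonical unit vectors, $T$ is the time horizon, and $\mathcal{W}=\sum_{t=0}^{T-1}A^tBB^{\top}(A^t)^{\top}$ is positive definite. Let $P$ and $\Theta_P$ be as in the context. (a) If $A$ is a directed line network, i.e., its only possibly nonzero entries are $a_{q+1,q}$, $q=1,\dots,n-1$, then every entry of $\Theta_P$ outside the first sub-diagonal is zero. (b) If $A$ is a directed ring network, i.e., its only possibly nonzero entries are $a_{q+1,q}$, $q=1,\dots,n-1$, and $a_{1n}$, then every entry of $\Theta_P$ outside the first sub-diagonal and the entry $(1,n)$ is zero. In both cases $\Theta_P$ has the same sparsity structure as $A$.
   Context: $P$ is one of $I$, $\mathcal{W}^{-1}$, $\mathcal{W}^{-2}$, or $vv^{\top}$ with $v$ a unit eigenvector of $\mathcal{W}$ for a simple eigenvalue. $\Theta_P=\sum_{k=1}^{m}\sum_{t=1}^{T-1}\overline{C}_k^{(t)}\overline{O}_k^{(t)}$, where, with $b_k$ the $k$-th column of $B$, $\overline{C}_k^{(t)}=\begin{pmatrix}(A^{t-1})^{\top}PA^tb_k & \cdots & A^{\top}PA^tb_k & PA^tb_k\end{pmatrix}$ and $\overline{O}_k^{(t)}=\begin{pmatrix}b_k & Ab_k&\cdots&A^{t-1}b_k\end{pmatrix}^{\top}$. Entry $(j,i)$ with $j>i$ lies in the $(j-i)$-th sub-diagonal. *)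

theory Defs
  imports "Jordan_Normal_Form.Matrix" "Jordan_Normal_Form.Char_Poly"
begin

definition gramian :: "real mat \<Rightarrow> real mat \<Rightarrow> nat \<Rightarrow> real mat" where
  "gramian A B T = mat (dim_row A) (dim_row A)
     (\<lambda>(i,j). \<Sum>t<T. (A ^\<^sub>m t * B * transpose_mat B * transpose_mat (A ^\<^sub>m t)) $$ (i,j))"

definition pos_def_mat :: "real mat \<Rightarrow> bool" where
  "pos_def_mat W \<longleftrightarrow> W \<in> carrier_mat (dim_row W) (dim_row W) \<and> transpose_mat W = W \<and>
     (\<forall>x \<in> carrier_vec (dim_row W). x \<noteq> 0\<^sub>v (dim_row W) \<longrightarrow> x \<bullet> (W *\<^sub>v x) > 0)"

definition admissible_P :: "real mat \<Rightarrow> real mat \<Rightarrow> bool" where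
  "admissible_P W P \<longleftrightarrow> (let n = dim_row W in
     P = 1\<^sub>m n
   \<or> (\<exists>Winv \<in> carrier_mat n n. Winv * W = 1\<^sub>m n \<and> W * Winv = 1\<^sub>m n \<and> P = Winv)
   \<or> (\<exists>Winv \<in> carrier_mat n n. Winv * W = 1\<^sub>m n \<and> W * Winv = 1\<^sub>m n \<and> P = Winv * Winv)
   \<or> (\<exists>v lam. eigenvector W v lam \<and> v \<bullet> v = 1 \<and> order lam (char_poly W) = 1 \<and>
         P = mat_of_cols n [v] * mat_of_rows n [v]))"

definition Cbar :: "real mat \<Rightarrow> real mat \<Rightarrow> real vec \<Rightarrow> nat \<Rightarrow> real mat" where
  "Cbar A P b t = mat_of_cols (dim_row A)
     (map (\<lambda>j. transpose_mat (A ^\<^sub>m (t - 1 - j)) *\<^sub>v (P *\<^sub>v (A ^\<^sub>m t *\<^sub>v b))) [0..<t])"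

definition Obar :: "real mat \<Rightarrow> real vec \<Rightarrow> nat \<Rightarrow> real mat" where
  "Obar A b t = mat_of_rows (dim_row A) (map (\<lambda>j. A ^\<^sub>m j *\<^sub>v b) [0..<t])"

definition Theta :: "real mat \<Rightarrow> real mat \<Rightarrow> real mat \<Rightarrow> nat \<Rightarrow> real mat" where
  "Theta A B P T = mat (dim_row A) (dim_row A)
     (\<lambda>(i,j). \<Sum>k<dim_col B. \<Sum>t\<in>{1..<T}. (Cbar A P (col B k) t * Obar A (col B k) t) $$ (i,j))"

end

theory Submission
  imports Defs "HOL-Number_Theory.Cong"
begin

(* Call a matrix graded of degree s modulo N if its entry (i,j) can be nonzero only when
   i = j + s (mod N); a directed line is graded of degree 1 modulo 0, a directed ring of
   degree 1 modulo n. Degrees add under products and change sign under transposition, and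
   the unit vector e_c has degree c. As the columns of B are unit vectors, B B^T and hence
   the Gramian W have degree 0, i.e. are diagonal. Then every admissible P is diagonal:
   inverses of diagonal matrices are diagonal, and a simple eigenvalue of a diagonal matrix
   sits at a single diagonal position, so its eigenvectors are multiples of a unit vector.
   Finally Cbar_k^(t) Obar_k^(t) = sum_j (A^(t-1-j))^T P A^t b_k (A^j b_k)^T is a sum of
   outer products of vectors of degrees (j+1) s + c and j s + c, so Theta_P has degree s
   whenever A has. *)

definition graded_mat :: "int \<Rightarrow> nat \<Rightarrow> int \<Rightarrow> 'a :: zero mat \<Rightarrow> bool" where
  "graded_mat N n s M \<longleftrightarrow> M \<in> carrier_mat n n \<and>
     (\<forall>i<n. \<forall>j<n. M $$ (i,j) \<noteq> 0 \<longrightarrow> [int i = int j + s] (mod N))"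

definition graded_vec :: "int \<Rightarrow> nat \<Rightarrow> int \<Rightarrow> 'a :: zero vec \<Rightarrow> bool" where
  "graded_vec N n s v \<longleftrightarrow> v \<in> carrier_vec n \<and> (\<forall>i<n. v $ i \<noteq> 0 \<longrightarrow> [int i = s] (mod N))"

lemma graded_mat_mult:
  fixes M M' :: "'a :: semiring_0 mat"
  assumes "graded_mat N n s M" "graded_mat N n r M'"
  shows "graded_mat N n (s + r) (M * M')"
  unfolding graded_mat_def
proof (intro conjI allI impI)
  show "M * M' \<in> carrier_mat n n" using assms unfolding graded_mat_def by auto
  fix i j assume ij: "i < n" "j < n" "(M * M') $$ (i, j) \<noteq> 0"
  have "M \<in> carrier_mat n n" "M' \<in> carrier_mat n n" using assms by (auto simp: graded_mat_def)
  with ij have "(\<Sum>k\<in>{0..<n}. M $$ (i,k) * M' $$ (k,j)) \<noteq> 0"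
    by (simp add: scalar_prod_def)
  then obtain k where "k \<in> {0..<n}" "M $$ (i,k) * M' $$ (k,j) \<noteq> 0"
    by (rule sum.not_neutral_contains_not_neutral)
  then have "k < n" "M $$ (i,k) \<noteq> 0" "M' $$ (k,j) \<noteq> 0" by auto
  then have "[int i = int k + s] (mod N)" "[int k + s = int j + r + s] (mod N)"
    using assms ij by (auto simp: graded_mat_def cong_add_rcancel)
  then show "[int i = int j + (s + r)] (mod N)"
    by (metis cong_trans add.assoc add.commute)
qed

lemma graded_mat_mult_vec:
  fixes M :: "'a :: semiring_0 mat"
  assumes "graded_mat N n s M" "graded_vec N n r v"
  shows "graded_vec N n (s + r) (M *\<^sub>v v)"
  unfolding graded_vec_def
proof (intro conjI allI impI)
  show "M *\<^sub>v v \<in> carrier_vec n" using assms unfolding graded_mat_def graded_vec_def by auto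
  fix i assume i: "i < n" "(M *\<^sub>v v) $ i \<noteq> 0"
  have "M \<in> carrier_mat n n" "v \<in> carrier_vec n"
    using assms by (auto simp: graded_mat_def graded_vec_def)
  with i have "(\<Sum>k\<in>{0..<n}. M $$ (i,k) * v $ k) \<noteq> 0"
    by (simp add: scalar_prod_def)
  then obtain k where "k \<in> {0..<n}" "M $$ (i,k) * v $ k \<noteq> 0"
    by (rule sum.not_neutral_contains_not_neutral)
  then have "k < n" "M $$ (i,k) \<noteq> 0" "v $ k \<noteq> 0" by auto
  then have "[int i = int k + s] (mod N)" "[int k + s = r + s] (mod N)"
    using assms i by (auto simp: graded_mat_def graded_vec_def cong_add_rcancel)
  then show "[int i = s + r] (mod N)"
    by (metis cong_trans add.commute)
qed

lemma graded_mat_one: "graded_mat N n 0 (1\<^sub>m n :: 'a :: zero_neq_one mat)"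
  unfolding graded_mat_def by auto

lemma graded_mat_pow:
  fixes A :: "'a :: semiring_1 mat"
  assumes "graded_mat N n s A"
  shows "graded_mat N n (int k * s) (A ^\<^sub>m k)"
proof (induction k)
  case 0
  have "dim_row A = n" using assms by (auto simp: graded_mat_def)
  then show ?case using graded_mat_one by simp
next
  case (Suc k)
  from graded_mat_mult[OF Suc assms] show ?case by (simp add: algebra_simps)
qed

lemma graded_mat_transpose:
  assumes "graded_mat N n s M"
  shows "graded_mat N n (- s) (transpose_mat M)"
  using assms unfolding graded_mat_def
  by (auto simp: cong_sym_eq[of "int _"] cong_iff_dvd_diff dvd_diff_commute algebra_simps)

lemma graded_vec_unit: "c < n \<Longrightarrow> graded_vec N n (int c) (unit_vec n c :: 'a :: zero_neq_one vec)"
  unfolding graded_vec_def by auto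

lemma graded_mat_cols_times_rows:
  fixes cs rs :: "nat \<Rightarrow> 'a :: semiring_0 vec"
  assumes cs: "\<And>j. j < t \<Longrightarrow> graded_vec N n (d j + s) (cs j)"
    and rs: "\<And>j. j < t \<Longrightarrow> graded_vec N n (d j) (rs j)"
  shows "graded_mat N n s (mat_of_cols n (map cs [0..<t]) * mat_of_rows n (map rs [0..<t]))"
  unfolding graded_mat_def
proof (intro conjI allI impI)
  show "mat_of_cols n (map cs [0..<t]) * mat_of_rows n (map rs [0..<t]) \<in> carrier_mat n n"
    by (metis length_map mat_of_cols_carrier(1) mat_of_rows_carrier(1) mult_carrier_mat)
  fix i l assume il: "i < n" "l < n"
    "(mat_of_cols n (map cs [0..<t]) * mat_of_rows n (map rs [0..<t])) $$ (i, l) \<noteq> 0"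
  then have "(\<Sum>j\<in>{0..<t}. cs j $ i * rs j $ l) \<noteq> 0"
    by (simp add: scalar_prod_def mat_of_cols_index mat_of_rows_index)
  then obtain j where "j \<in> {0..<t}" "cs j $ i * rs j $ l \<noteq> 0"
    by (rule sum.not_neutral_contains_not_neutral)
  then have j: "j < t" and "cs j $ i \<noteq> 0" "rs j $ l \<noteq> 0" by auto
  then have "[int i = d j + s] (mod N)" "[int l = d j] (mod N)"
    using cs[OF j] rs[OF j] il by (auto simp: graded_vec_def)
  then show "[int i = int l + s] (mod N)"
    by (metis cong_add_rcancel cong_sym cong_trans)
qed

lemma graded_mat_entrywise_sum:
  fixes F :: "'b \<Rightarrow> 'a :: comm_monoid_add mat"
  assumes "\<And>x. x \<in> X \<Longrightarrow> graded_mat N n s (F x)"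
  shows "graded_mat N n s (mat n n (\<lambda>(i,j). \<Sum>x\<in>X. F x $$ (i,j)))"
  unfolding graded_mat_def
proof (intro conjI allI impI)
  fix i j assume ij: "i < n" "j < n" "mat n n (\<lambda>(i,j). \<Sum>x\<in>X. F x $$ (i,j)) $$ (i,j) \<noteq> 0"
  then have "(\<Sum>x\<in>X. F x $$ (i,j)) \<noteq> 0" by simp
  then obtain x where "x \<in> X" "F x $$ (i,j) \<noteq> 0"
    by (rule sum.not_neutral_contains_not_neutral)
  then show "[int i = int j + s] (mod N)" using assms ij by (auto simp: graded_mat_def)
qed simp

lemma graded_mat_0_iff_diagonal:
  assumes "N = 0 \<or> N = int n"
  shows "graded_mat N n 0 M \<longleftrightarrow> M \<in> carrier_mat n n \<and> diagonal_mat M"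
proof -
  have "[int i = int j] (mod N) \<longleftrightarrow> i = j" if "i < n" "j < n" for i j
    using assms that cong_less_imp_eq_int[of "int i" N "int j"] by auto
  then show ?thesis unfolding graded_mat_def diagonal_mat_def by fastforce
qed

lemma graded_mat_line_iff:
  "graded_mat 0 n 1 M \<longleftrightarrow> M \<in> carrier_mat n n \<and> (\<forall>i<n. \<forall>j<n. i \<noteq> j + 1 \<longrightarrow> M $$ (i,j) = 0)"
  unfolding graded_mat_def by fastforce

lemma cong_succ_mod_less_iff:
  assumes "i < n" "j < n"
  shows "[int i = int j + 1] (mod int n) \<longleftrightarrow> i = j + 1 \<or> (i = 0 \<and> j = n - 1)"
proof
  assume "[int i = int j + 1] (mod int n)"
  moreover have "[int j + 1 = int ((j + 1) mod n)] (mod int n)"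
    by (simp add: of_nat_mod add.commute)
  ultimately have "[int i = int ((j + 1) mod n)] (mod int n)"
    by (rule cong_trans)
  then have "i = (j + 1) mod n"
    using assms cong_less_imp_eq_int[of "int i" "int n" "int ((j + 1) mod n)"] by simp
  then show "i = j + 1 \<or> (i = 0 \<and> j = n - 1)"
    using assms by (cases "j + 1 = n") auto
next
  assume "i = j + 1 \<or> (i = 0 \<and> j = n - 1)"
  then show "[int i = int j + 1] (mod int n)"
    using assms by (auto simp: cong_iff_dvd_diff of_nat_diff)
qed

lemma graded_mat_ring_iff:
  "graded_mat (int n) n 1 M \<longleftrightarrow> M \<in> carrier_mat n n \<and>
     (\<forall>i<n. \<forall>j<n. i \<noteq> j + 1 \<and> \<not> (i = 0 \<and> j = n - 1) \<longrightarrow> M $$ (i,j) = 0)"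
  unfolding graded_mat_def using cong_succ_mod_less_iff by blast

lemma graded_Cbar_Obar:
  assumes A: "graded_mat N n s A" and P: "graded_mat N n 0 P" and c: "c < n"
  shows "graded_mat N n s (Cbar A P (unit_vec n c) t * Obar A (unit_vec n c) t)"
proof -
  have dA: "dim_row A = n" using A by (auto simp: graded_mat_def)
  have "graded_vec N n (int j * s + int c + s)
      (transpose_mat (A ^\<^sub>m (t - 1 - j)) *\<^sub>v (P *\<^sub>v (A ^\<^sub>m t *\<^sub>v unit_vec n c)))"
    if "j < t" for j
  proof -
    have "- (int (t - 1 - j) * s) + (0 + (int t * s + int c)) = int j * s + int c + s"
      using that by (simp add: of_nat_diff algebra_simps)
    moreover have "graded_vec N n (- (int (t - 1 - j) * s) + (0 + (int t * s + int c)))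
        (transpose_mat (A ^\<^sub>m (t - 1 - j)) *\<^sub>v (P *\<^sub>v (A ^\<^sub>m t *\<^sub>v unit_vec n c)))"
      by (intro graded_mat_mult_vec graded_mat_transpose graded_mat_pow graded_vec_unit A P c)
    ultimately show ?thesis by (simp only:)
  qed
  moreover have "graded_vec N n (int j * s + int c) (A ^\<^sub>m j *\<^sub>v unit_vec n c)" for j
    by (intro graded_mat_mult_vec graded_mat_pow graded_vec_unit A c)
  ultimately show ?thesis
    unfolding Cbar_def Obar_def dA by (rule graded_mat_cols_times_rows)
qed

lemma graded_Theta_of_graded_P:
  assumes A: "graded_mat N n s A" and P: "graded_mat N n 0 P"
    and B: "B \<in> carrier_mat n m" and Bcols: "\<forall>k<m. \<exists>i<n. col B k = unit_vec n i"
  shows "graded_mat N n s (Theta A B P T)"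
proof -
  let ?F = "\<lambda>(k, t). Cbar A P (col B k) t * Obar A (col B k) t"
  have "graded_mat N n s (?F x)" if "x \<in> {..<m} \<times> {1..<T}" for x
    using that Bcols graded_Cbar_Obar[OF A P] by auto
  then have "graded_mat N n s (mat n n (\<lambda>(i,j). \<Sum>x\<in>{..<m} \<times> {1..<T}. ?F x $$ (i,j)))"
    by (rule graded_mat_entrywise_sum)
  moreover have "dim_row A = n" "dim_col B = m" using A B by (auto simp: graded_mat_def)
  ultimately show ?thesis
    unfolding Theta_def by (simp add: sum.cartesian_product split_def)
qed

lemma graded_gramian:
  assumes A: "graded_mat N n s A" and B: "B \<in> carrier_mat n m"
    and BBt: "graded_mat N n 0 (B * transpose_mat B)"
  shows "graded_mat N n 0 (gramian A B T)"
proof -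
  have "graded_mat N n 0 (A ^\<^sub>m t * B * transpose_mat B * transpose_mat (A ^\<^sub>m t))" for t
  proof -
    have "graded_mat N n (int t * s + 0 + - (int t * s))
        (A ^\<^sub>m t * (B * transpose_mat B) * transpose_mat (A ^\<^sub>m t))"
      by (intro graded_mat_mult graded_mat_transpose graded_mat_pow A BBt)
    moreover have "A ^\<^sub>m t * B * transpose_mat B = A ^\<^sub>m t * (B * transpose_mat B)"
      using A B by (auto simp: graded_mat_def intro: assoc_mult_mat)
    ultimately show ?thesis by simp
  qed
  moreover have "dim_row A = n" using A by (auto simp: graded_mat_def)
  ultimately show ?thesis
    unfolding gramian_def by (simp add: graded_mat_entrywise_sum)
qed

lemma diagonal_mat_unit_cols_mult_transpose:
  fixes B :: "'a :: semiring_1 mat"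
  assumes B: "B \<in> carrier_mat n m" and Bcols: "\<forall>k<m. \<exists>i<n. col B k = unit_vec n i"
  shows "diagonal_mat (B * transpose_mat B)"
  unfolding diagonal_mat_def
proof (intro allI impI)
  fix i j assume "i < dim_row (B * transpose_mat B)" "j < dim_col (B * transpose_mat B)" "i \<noteq> j"
  with B have ij: "i < n" "j < n" "i \<noteq> j" by auto
  have "B $$ (i,k) * B $$ (j,k) = 0" if k: "k < m" for k
  proof -
    obtain c where c: "c < n" "col B k = unit_vec n c" using Bcols k by auto
    then have "B $$ (i,k) = unit_vec n c $ i" "B $$ (j,k) = unit_vec n c $ j"
      using B ij k by (metis carrier_matD index_col)+
    then show ?thesis using ij c by auto
  qed
  then show "(B * transpose_mat B) $$ (i, j) = 0"
    using B ij by (simp add: scalar_prod_def)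
qed

lemma diagonal_mat_mult_vec_index:
  fixes W :: "'a :: semiring_0 mat"
  assumes W: "W \<in> carrier_mat n n" "diagonal_mat W" and v: "v \<in> carrier_vec n" and i: "i < n"
  shows "(W *\<^sub>v v) $ i = W $$ (i,i) * v $ i"
proof -
  have "(W *\<^sub>v v) $ i = (\<Sum>k\<in>{0..<n}. W $$ (i,k) * v $ k)"
    using W v i by (simp add: scalar_prod_def)
  also have "\<dots> = (\<Sum>k\<in>{0..<n}. if k = i then W $$ (i,i) * v $ i else 0)"
    using W i by (intro sum.cong) (auto simp: diagonal_mat_def)
  also have "\<dots> = W $$ (i,i) * v $ i"
    using i by simp
  finally show ?thesis .
qed

lemma diagonal_mat_right_inverse:
  fixes W V :: "'a :: idom mat"
  assumes W: "W \<in> carrier_mat n n" "diagonal_mat W" and V: "V \<in> carrier_mat n n"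
    and WV: "W * V = 1\<^sub>m n"
  shows "diagonal_mat V"
proof -
  have entry: "(W * V) $$ (i,j) = W $$ (i,i) * V $$ (i,j)" if "i < n" "j < n" for i j
    using diagonal_mat_mult_vec_index[OF W, of "col V j" i] W(1) V that by simp
  show ?thesis unfolding diagonal_mat_def
  proof (intro allI impI)
    fix i j assume "i < dim_row V" "j < dim_col V" "i \<noteq> j"
    with V have ij: "i < n" "j < n" "i \<noteq> j" by auto
    have "W $$ (i,i) \<noteq> 0" using entry[of i i] WV ij by auto
    moreover have "W $$ (i,i) * V $$ (i,j) = 0" using entry[of i j] WV ij by simp
    ultimately show "V $$ (i,j) = 0" by simp
  qed
qed

lemma char_poly_diagonal_mat:
  fixes W :: "'a :: comm_ring_1 mat"
  assumes "W \<in> carrier_mat n n" "diagonal_mat W"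
  shows "char_poly W = (\<Prod>k\<in>{0..<n}. [:- W $$ (k,k), 1:])"
proof -
  have ut: "upper_triangular W" using assms unfolding diagonal_mat_def upper_triangular_def by auto
  show ?thesis
    unfolding char_poly_upper_triangular[OF assms(1) ut] diag_mat_def using assms(1)
    by (simp add: prod.distinct_set_conv_list[symmetric])
qed

lemma diagonal_mat_simple_eigenvalue_unique_index:
  fixes W :: "'a :: idom mat"
  assumes W: "W \<in> carrier_mat n n" "diagonal_mat W" and simple: "order lam (char_poly W) = 1"
    and ij: "i < n" "j < n" "W $$ (i,i) = lam" "W $$ (j,j) = lam"
  shows "i = j"
proof (rule ccontr)
  assume "i \<noteq> j"
  define f where "f k = [:- W $$ (k,k), 1:]" for k
  have "char_poly W = (\<Prod>k\<in>{0..<n} - {i,j}. f k) * (\<Prod>k\<in>{i,j}. f k)"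
    unfolding char_poly_diagonal_mat[OF W] f_def using ij by (intro prod.subset_diff) auto
  also have "(\<Prod>k\<in>{i,j}. f k) = [:- lam, 1:] ^ 2"
    using \<open>i \<noteq> j\<close> ij by (simp add: f_def power2_eq_square)
  finally have "[:- lam, 1:] ^ 2 dvd char_poly W" by simp
  moreover have "char_poly W \<noteq> 0"
    unfolding char_poly_diagonal_mat[OF W] by (simp add: prod_zero_iff)
  ultimately show False using simple by (simp add: order_divides)
qed

lemma diagonal_mat_eigenvector_support:
  fixes W :: "'a :: idom mat"
  assumes W: "W \<in> carrier_mat n n" "diagonal_mat W" and ev: "eigenvector W v lam"
    and i: "i < n" "v $ i \<noteq> 0"
  shows "W $$ (i,i) = lam"
proof -
  have v: "v \<in> carrier_vec n" "W *\<^sub>v v = lam \<cdot>\<^sub>v v"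
    using ev W unfolding eigenvector_def by auto
  have "W $$ (i,i) * v $ i = lam * v $ i"
    using diagonal_mat_mult_vec_index[OF W v(1) i(1)] v i by simp
  with i show ?thesis by simp
qed

lemma diagonal_mat_simple_eigenvector_outer:
  fixes W :: "'a :: idom mat"
  assumes W: "W \<in> carrier_mat n n" "diagonal_mat W" and ev: "eigenvector W v lam"
    and simple: "order lam (char_poly W) = 1"
  shows "diagonal_mat (mat_of_cols n [v] * mat_of_rows n [v])"
  unfolding diagonal_mat_def
proof (intro allI impI)
  have v: "v \<in> carrier_vec n" using ev W unfolding eigenvector_def by auto
  fix i j assume "i < dim_row (mat_of_cols n [v] * mat_of_rows n [v])"
    "j < dim_col (mat_of_cols n [v] * mat_of_rows n [v])" "i \<noteq> j"
  then have ij: "i < n" "j < n" "i \<noteq> j" by auto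
  have "v $ i = 0 \<or> v $ j = 0"
    using diagonal_mat_eigenvector_support[OF W ev]
      diagonal_mat_simple_eigenvalue_unique_index[OF W simple] ij
    by metis
  then show "(mat_of_cols n [v] * mat_of_rows n [v]) $$ (i, j) = 0"
    using ij v by (auto simp: scalar_prod_def mat_of_cols_index mat_of_rows_index)
qed

lemma admissible_P_diagonal:
  assumes W: "W \<in> carrier_mat n n" "diagonal_mat W" and P: "admissible_P W P"
  shows "P \<in> carrier_mat n n \<and> diagonal_mat P"
proof -
  have diagonal_square: "diagonal_mat (V * V)"
    if "V \<in> carrier_mat n n" "diagonal_mat V" for V :: "real mat"
    using graded_mat_mult[of 0 n 0 V 0 V] graded_mat_0_iff_diagonal[of 0 n] that by auto
  have "dim_row W = n" using W by simp
  with P consider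
      "P = 1\<^sub>m n"
    | V where "V \<in> carrier_mat n n" "W * V = 1\<^sub>m n" "P = V"
    | V where "V \<in> carrier_mat n n" "W * V = 1\<^sub>m n" "P = V * V"
    | v lam where "eigenvector W v lam" "order lam (char_poly W) = 1"
        "P = mat_of_cols n [v] * mat_of_rows n [v]"
    unfolding admissible_P_def Let_def by blast
  then show ?thesis
  proof cases
    case 1
    then show ?thesis by (simp add: diagonal_mat_def)
  next
    case (2 V)
    then show ?thesis using diagonal_mat_right_inverse[OF W] by simp
  next
    case (3 V)
    then show ?thesis using diagonal_mat_right_inverse[OF W] diagonal_square by simp
  next
    case (4 v lam)
    moreover have "mat_of_cols n [v] * mat_of_rows n [v] \<in> carrier_mat n n"
      by (metis mat_of_cols_carrier(1) mat_of_rows_carrier(1) mult_carrier_mat)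
    ultimately show ?thesis using diagonal_mat_simple_eigenvector_outer[OF W] by simp
  qed
qed

lemma graded_Theta:
  assumes N: "N = 0 \<or> N = int n" and A: "graded_mat N n s A"
    and B: "B \<in> carrier_mat n m" and Bcols: "\<forall>k<m. \<exists>i<n. col B k = unit_vec n i"
    and P: "admissible_P (gramian A B T) P"
  shows "graded_mat N n s (Theta A B P T)"
proof -
  have "graded_mat N n 0 (B * transpose_mat B)"
    unfolding graded_mat_0_iff_diagonal[OF N]
    using diagonal_mat_unit_cols_mult_transpose[OF B Bcols] B by simp
  then have "graded_mat N n 0 (gramian A B T)" by (rule graded_gramian[OF A B])
  then have "gramian A B T \<in> carrier_mat n n" "diagonal_mat (gramian A B T)"
    unfolding graded_mat_0_iff_diagonal[OF N] by auto
  then have "graded_mat N n 0 P"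
    unfolding graded_mat_0_iff_diagonal[OF N] using P by (rule admissible_P_diagonal)
  then show ?thesis by (rule graded_Theta_of_graded_P[OF A _ B Bcols])
qed

theorem corollary4p3:
  fixes A B P :: "real mat" and n m T :: nat
  assumes n2: "n \<ge> 2"
    and A: "A \<in> carrier_mat n n"
    and B: "B \<in> carrier_mat n m"
    and Bcols: "\<forall>k<m. \<exists>i<n. col B k = unit_vec n i"
    and Wpd: "pos_def_mat (gramian A B T)"
    and P: "admissible_P (gramian A B T) P"
  shows
    "((\<forall>i<n. \<forall>j<n. i \<noteq> j + 1 \<longrightarrow> A $$ (i,j) = 0) \<longrightarrow>
        (\<forall>i<n. \<forall>j<n. i \<noteq> j + 1 \<longrightarrow> Theta A B P T $$ (i,j) = 0))
   \<and> ((\<forall>i<n. \<forall>j<n. i \<noteq> j + 1 \<and> \<not> (i = 0 \<and> j = n - 1) \<longrightarrow> A $$ (i,j) = 0) \<longrightarrow>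
        (\<forall>i<n. \<forall>j<n. i \<noteq> j + 1 \<and> \<not> (i = 0 \<and> j = n - 1) \<longrightarrow> Theta A B P T $$ (i,j) = 0))"
proof -
  have "graded_mat 0 n 1 A \<Longrightarrow> graded_mat 0 n 1 (Theta A B P T)"
    "graded_mat (int n) n 1 A \<Longrightarrow> graded_mat (int n) n 1 (Theta A B P T)"
    using graded_Theta[OF _ _ B Bcols P] by auto
  with A show ?thesis
    unfolding graded_mat_line_iff graded_mat_ring_iff by blast
qed

end
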